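(* Let $q=2^{v}$ and $s=2^{k}$ with $1\le k\le v$, let $n=(s-1)q+s$, and let $\mathcal{K}$ be a maximal $(n,s)$-arc in $PG(2,q)$. Then $\mathcal{K}$ is an optimal $(1,\mu)$-saturating $n$-set with $\mu=\frac{1}{2}(s-1)n$. Moreover, a linear code $C$ over $\mathbb{F}_q$ corresponding to $\mathcal{K}$ is an $[n,n-3]_q$ code with covering radius $2$, and $C$ is a $(2,\mu)$-PMCF code if $s=2$ and a $(2,\mu)$-APMCF code if $s\ge 4$.
   Context: $PG(N,q)$ is the $N$-dimensional projective space over $\mathbb{F}_q$. A maximal $(n,s)$-arc in $PG(2,q)$ is a set of $n$ points such that every line meets it in either $0$ or $s$ points. For a point set $S$, a secant of $S$ is a line $\ell$ with $|\ell\cap S|\ge2$, counted with multiplicity $\binom{|\ell\cap S|}{2}$. A set $S$ of $n$ points of $PG(N,q)$ is a $(1,\mu)$-saturating $n$-set if (M1) $S$ spans $PG(N,q)$, (M2) $S\neq PG(N,q)$, and (M3) every point $Q\notin S$ lies on secants of $S$ whose multiplicities sum to at least $\mu$; it is optimal if for every $Q\notin S$ this sum is exactly $\mu$. A linear code of length $n$ over $\mathbb{F}_q$ corresponds to $S=\{P_1,\dots,P_n\}\subset PG(N,q)$ if it has a parity-check matrix whose $i$-th column is a homogeneous coordinate vector of $P_i$. An $[n,k]_q$ code is a linear code of length $n$ and dimension $k$; its covering radius $R$ is $\max_{x\in\mathbb{F}_q^n} d(x,C)$ (Hamming distance), and $d(C)$ is its minimum distance. A code $C$ with covering radius $R$ is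 an $(R,\mu)$-APMCF code if every $x\in\mathbb{F}_q^n$ with $d(x,C)=R$ is at distance exactly $R$ from exactly $\mu$ codewords; it is an $(R,\mu)$-PMCF code if in addition $d(C)\ge 2R$. *)

theory Defs
  imports "HOL-Analysis.Analysis" "HOL-Library.Function_Algebras"
begin

definition pg_point :: "'a::field ^ 3 \<Rightarrow> ('a ^ 3) set" where
  "pg_point x = {c *s x | c. c \<noteq> 0}"

definition pg_points :: "('a::field ^ 3) set set" where
  "pg_points = {pg_point x | x. x \<noteq> 0}"

definition dot3 :: "'a::field ^ 3 \<Rightarrow> 'a ^ 3 \<Rightarrow> 'a" where
  "dot3 a x = (\<Sum>i\<in>UNIV. a $ i * x $ i)"

definition pg_line :: "'a::field ^ 3 \<Rightarrow> ('a ^ 3) set set" where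
  "pg_line a = {P \<in> pg_points. \<forall>x\<in>P. dot3 a x = 0}"

definition pg_lines :: "('a::field ^ 3) set set set" where
  "pg_lines = {pg_line a | a. a \<noteq> 0}"

definition maximal_arc :: "('a::field ^ 3) set set \<Rightarrow> nat \<Rightarrow> nat \<Rightarrow> bool" where
  "maximal_arc K n s \<longleftrightarrow> K \<subseteq> pg_points \<and> finite K \<and> card K = n \<and>
     (\<forall>l\<in>pg_lines. card (l \<inter> K) = 0 \<or> card (l \<inter> K) = s)"

definition pg_spans :: "('a::field ^ 3) set set \<Rightarrow> bool" where
  "pg_spans S \<longleftrightarrow> (\<forall>y::'a^3. \<exists>X c. finite X \<and> X \<subseteq> \<Union>S \<and> y = (\<Sum>x\<in>X. c x *s x))"

definition secant_mult :: "('a::field ^ 3) set set \<Rightarrow> ('a ^ 3) set \<Rightarrow> nat" where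
  "secant_mult S Q = (\<Sum>l\<in>{l\<in>pg_lines. Q \<in> l \<and> card (l \<inter> S) \<ge> 2}. card (l \<inter> S) choose 2)"

definition saturating_1_mu :: "('a::field ^ 3) set set \<Rightarrow> nat \<Rightarrow> nat \<Rightarrow> bool" where
  "saturating_1_mu S mu n \<longleftrightarrow> S \<subseteq> pg_points \<and> finite S \<and> card S = n \<and>
     pg_spans S \<and> S \<noteq> pg_points \<and> (\<forall>Q\<in>pg_points - S. secant_mult S Q \<ge> mu)"

definition optimal_saturating_1_mu :: "('a::field ^ 3) set set \<Rightarrow> nat \<Rightarrow> nat \<Rightarrow> bool" where
  "optimal_saturating_1_mu S mu n \<longleftrightarrow> saturating_1_mu S mu n \<and>
     (\<forall>Q\<in>pg_points - S. secant_mult S Q = mu)"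

definition words :: "nat \<Rightarrow> (nat \<Rightarrow> 'a::zero) set" where
  "words n = {x. \<forall>i\<ge>n. x i = 0}"

definition hamming :: "nat \<Rightarrow> (nat \<Rightarrow> 'a) \<Rightarrow> (nat \<Rightarrow> 'a) \<Rightarrow> nat" where
  "hamming n x y = card {i. i < n \<and> x i \<noteq> y i}"

definition wscale :: "'a::field \<Rightarrow> (nat \<Rightarrow> 'a) \<Rightarrow> (nat \<Rightarrow> 'a)" where
  "wscale c x = (\<lambda>i. c * x i)"

definition code_dim :: "(nat \<Rightarrow> 'a::field) set \<Rightarrow> nat" where
  "code_dim C = vector_space.dim wscale C"

text \<open>The code with parity-check matrix whose i-th column is h i (i < n).\<close>
definition parity_code :: "nat \<Rightarrow> (nat \<Rightarrow> 'a::field ^ 3) \<Rightarrow> (nat \<Rightarrow> 'a) set" where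
  "parity_code n h = {x \<in> words n. (\<Sum>i<n. x i *s h i) = 0}"

definition corresponds :: "nat \<Rightarrow> (nat \<Rightarrow> 'a::field ^ 3) \<Rightarrow> ('a ^ 3) set set \<Rightarrow> bool" where
  "corresponds n h S \<longleftrightarrow> (\<forall>i<n. h i \<noteq> 0) \<and> bij_betw (\<lambda>i. pg_point (h i)) {..<n} S"

definition dist_to_code :: "nat \<Rightarrow> (nat \<Rightarrow> 'a) set \<Rightarrow> (nat \<Rightarrow> 'a) \<Rightarrow> nat" where
  "dist_to_code n C x = Min (hamming n x ` C)"

definition covering_radius :: "nat \<Rightarrow> (nat \<Rightarrow> 'a::zero) set \<Rightarrow> nat" where
  "covering_radius n C = Max (dist_to_code n C ` words n)"

definition min_distance :: "nat \<Rightarrow> (nat \<Rightarrow> 'a) set \<Rightarrow> nat" where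
  "min_distance n C = Min {hamming n c c' | c c'. c \<in> C \<and> c' \<in> C \<and> c \<noteq> c'}"

definition APMCF :: "nat \<Rightarrow> (nat \<Rightarrow> 'a::zero) set \<Rightarrow> nat \<Rightarrow> nat \<Rightarrow> bool" where
  "APMCF n C R mu \<longleftrightarrow> covering_radius n C = R \<and>
     (\<forall>x\<in>words n. dist_to_code n C x = R \<longrightarrow> card {c\<in>C. hamming n x c = R} = mu)"

definition PMCF :: "nat \<Rightarrow> (nat \<Rightarrow> 'a::zero) set \<Rightarrow> nat \<Rightarrow> nat \<Rightarrow> bool" where
  "PMCF n C R mu \<longleftrightarrow> APMCF n C R mu \<and> min_distance n C \<ge> 2 * R"

end

theory Submission
  imports Defs
begin

text \<open>Every line through a point Q off a maximal (n,s)-arc K meets K in 0 or s points, and these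
  lines partition K; hence there are n/s secants through Q, each of multiplicity
  s choose 2, and every point off K has secant multiplicity (s-1)n/2. For the code whose
  parity-check columns represent the points of K, the distance of a word to the code is read off
  its syndrome: it is at most 1 iff the syndrome is 0 or represents a point of K, and otherwise the
  codewords at distance 2 correspond to the pairs of points of K collinear with the syndrome
  point, i.e. to the secants through it counted with multiplicity. A spanning point set contains
  three non-collinear points, which gives dimension n - 3; for s = 2 no three points of K are
  collinear, which gives minimum distance at least 4.\<close>

section \<open>Vectors and the projective plane\<close>

definition cross :: "'a::field^3 \<Rightarrow> 'a^3 \<Rightarrow> 'a^3" where
  "cross x y = vector [x$2*y$3 - x$3*y$2, x$3*y$1 - x$1*y$3, x$1*y$2 - x$2*y$1]"

text \<open>\<open>dot3 (cross x y) z\<close> is the determinant of the matrix with rows \<open>x\<close>, \<open>y\<close>, \<open>z\<close>.\<close>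

lemma cross_nth [simp]:
  "cross x y $ 1 = x$2*y$3 - x$3*y$2"
  "cross x y $ 2 = x$3*y$1 - x$1*y$3"
  "cross x y $ 3 = x$1*y$2 - x$2*y$1"
  by (simp_all add: cross_def)

lemma dot3_expand: "dot3 a x = a$1*x$1 + a$2*x$2 + a$3*x$3"
  by (simp add: dot3_def sum_3)

lemma vec3_eq_iff: "(x::'a^3) = y \<longleftrightarrow> x$1 = y$1 \<and> x$2 = y$2 \<and> x$3 = y$3"
  by (simp add: vec_eq_iff forall_3)

lemma dot3_smult_right [simp]: "dot3 a (c *s x) = c * dot3 a x"
  and dot3_smult_left [simp]: "dot3 (c *s a) x = c * dot3 a x"
  and dot3_add [simp]: "dot3 a (x + y) = dot3 a x + dot3 a y"
  and dot3_zero [simp]: "dot3 a 0 = 0"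
  and dot3_zero_left [simp]: "dot3 0 x = 0"
  by (simp_all add: dot3_expand algebra_simps)

lemma dot3_sum: "dot3 a (\<Sum>x\<in>X. f x) = (\<Sum>x\<in>X. dot3 a (f x))"
  by (induction X rule: infinite_finite_induct) simp_all

lemma dot3_cross_self [simp]: "dot3 (cross x y) x = 0" "dot3 (cross x y) y = 0"
  by (simp_all add: dot3_expand algebra_simps)

lemma cross_self [simp]: "cross x x = 0"
  by (simp add: vec3_eq_iff)

lemma dot3_cross_cycle: "dot3 (cross x y) z = dot3 (cross y z) x"
  by (simp add: dot3_expand algebra_simps)

lemma dot3_cross_smult:
  "dot3 (cross (a *s x) (b *s y)) (c *s z) = a * b * c * dot3 (cross x y) z"
  by (simp add: dot3_expand algebra_simps)

lemma cramer_3: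
  "dot3 (cross x1 x2) x3 *s y =
     dot3 (cross y x2) x3 *s x1 + dot3 (cross x1 y) x3 *s x2 + dot3 (cross x1 x2) y *s x3"
  by (simp add: vec3_eq_iff dot3_expand algebra_simps)

lemma cross_cross: "cross (cross x y) a = dot3 a x *s y - dot3 a y *s x"
  by (simp add: vec3_eq_iff dot3_expand algebra_simps)

lemma cross_eq_0_imp_multiple:
  fixes x y :: "'a::field^3"
  assumes "x \<noteq> 0" "cross x y = 0"
  shows "\<exists>c. y = c *s x"
proof -
  have e: "x$1*y$2 = x$2*y$1" "x$3*y$1 = x$1*y$3" "x$2*y$3 = x$3*y$2"
    using assms(2) by (simp_all add: vec3_eq_iff)
  from assms(1) consider "x$1 \<noteq> 0" | "x$2 \<noteq> 0" | "x$3 \<noteq> 0"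
    by (auto simp: vec3_eq_iff)
  then show ?thesis
  proof cases
    case 1
    with e show ?thesis by (intro exI[of _ "y$1/x$1"]) (simp add: vec3_eq_iff field_simps)
  next
    case 2
    with e show ?thesis by (intro exI[of _ "y$2/x$2"]) (simp add: vec3_eq_iff field_simps)
  next
    case 3
    with e show ?thesis by (intro exI[of _ "y$3/x$3"]) (simp add: vec3_eq_iff field_simps)
  qed
qed

lemma det3_independent:
  fixes x y z :: "'a::field^3"
  assumes "dot3 (cross x y) z \<noteq> 0" "a *s x + b *s y + c *s z = 0"
  shows "a = 0 \<and> b = 0 \<and> c = 0"
proof -
  define v where "v = a *s x + b *s y + c *s z"
  have "dot3 (cross v y) z = a * dot3 (cross x y) z"
       "dot3 (cross x v) z = b * dot3 (cross x y) z"
       "dot3 (cross x y) v = c * dot3 (cross x y) z"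
    unfolding v_def by (simp_all add: dot3_expand algebra_simps)
  with assms show ?thesis unfolding v_def[symmetric] by (simp add: dot3_expand)
qed

lemma pg_point_self: "x \<noteq> 0 \<Longrightarrow> x \<in> pg_point x"
  unfolding pg_point_def by (rule CollectI, rule exI[of _ 1]) simp

lemma pg_point_in_pg_points: "x \<noteq> 0 \<Longrightarrow> pg_point x \<in> pg_points"
  unfolding pg_points_def by auto

lemma pg_pointsE:
  assumes "P \<in> pg_points"
  obtains x where "x \<noteq> 0" "P = pg_point x"
  using assms unfolding pg_points_def by auto

lemma pg_point_eq_iff:
  fixes x y :: "'a::field^3"
  assumes "x \<noteq> 0"
  shows "pg_point x = pg_point y \<longleftrightarrow> (\<exists>c. c \<noteq> 0 \<and> y = c *s x)"
proof
  assume "pg_point x = pg_point y"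
  then have "x \<in> pg_point y" using pg_point_self[OF assms] by simp
  then obtain c where "c \<noteq> 0" "x = c *s y" unfolding pg_point_def by auto
  then have "y = (1 / c) *s x" "1 / c \<noteq> 0" by (simp_all add: vector_smult_assoc)
  then show "\<exists>c. c \<noteq> 0 \<and> y = c *s x" by blast
next
  assume "\<exists>c. c \<noteq> 0 \<and> y = c *s x"
  then obtain c where c: "c \<noteq> 0" "y = c *s x" by blast
  have "d *s x = (d / c) *s y" "d *s y = (d * c) *s x" for d
    using c by (simp_all add: vector_smult_assoc)
  with c(1) show "pg_point x = pg_point y"
    unfolding pg_point_def by (metis (no_types, opaque_lifting) divide_eq_0_iff mult_eq_0_iff)
qed

lemma pg_point_scale: "c \<noteq> 0 \<Longrightarrow> x \<noteq> 0 \<Longrightarrow> pg_point (c *s x) = pg_point x"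
  using pg_point_eq_iff by metis

lemma pg_point_in_pg_line_iff:
  fixes x :: "'a::field^3"
  assumes "x \<noteq> 0"
  shows "pg_point x \<in> pg_line a \<longleftrightarrow> dot3 a x = 0"
  using pg_point_self[OF assms] pg_point_in_pg_points[OF assms]
  unfolding pg_line_def by (auto simp: pg_point_def)

lemma pg_line_scale: "c \<noteq> 0 \<Longrightarrow> pg_line (c *s a) = pg_line (a::'a::field^3)"
  unfolding pg_line_def by auto

lemma pg_line_subset_pg_points: "l \<in> pg_lines \<Longrightarrow> l \<subseteq> pg_points"
  unfolding pg_lines_def pg_line_def by auto

lemma cross_neq_0:
  fixes x y :: "'a::field^3"
  assumes "x \<noteq> 0" "y \<noteq> 0" "pg_point x \<noteq> pg_point y"
  shows "cross x y \<noteq> 0"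
  using cross_eq_0_imp_multiple[OF assms(1)] assms pg_point_eq_iff[OF assms(1)] by fastforce

lemma pg_line_cross:
  fixes x y :: "'a::field^3"
  assumes "x \<noteq> 0" "y \<noteq> 0" "pg_point x \<noteq> pg_point y"
  shows "pg_line (cross x y) \<in> pg_lines" "pg_point x \<in> pg_line (cross x y)"
    "pg_point y \<in> pg_line (cross x y)"
  using cross_neq_0[OF assms] assms by (auto simp: pg_lines_def pg_point_in_pg_line_iff)

lemma pg_line_eq_cross:
  fixes x y :: "'a::field^3"
  assumes "x \<noteq> 0" "y \<noteq> 0" "pg_point x \<noteq> pg_point y"
    and "l \<in> pg_lines" "pg_point x \<in> l" "pg_point y \<in> l"
  shows "l = pg_line (cross x y)"
proof -
  obtain a where a: "a \<noteq> 0" "l = pg_line a" using assms(4) unfolding pg_lines_def by auto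
  have "dot3 a x = 0" "dot3 a y = 0"
    using assms(1,2,5,6) a(2) pg_point_in_pg_line_iff by auto
  then have "cross (cross x y) a = 0" by (simp add: cross_cross)
  then obtain c where c: "a = c *s cross x y"
    using cross_eq_0_imp_multiple cross_neq_0[OF assms(1-3)] by blast
  with a have "c \<noteq> 0" by auto
  with a c show ?thesis by (simp add: pg_line_scale)
qed

lemma pg_lines_eq:
  assumes "l \<in> pg_lines" "l' \<in> pg_lines" "P \<in> l" "P \<in> l'" "Q \<in> l" "Q \<in> l'" "P \<noteq> Q"
  shows "l = (l' :: ('a::field^3) set set)"
proof -
  obtain x y where "x \<noteq> 0" "P = pg_point x" "y \<noteq> 0" "Q = pg_point y"
    using assms pg_line_subset_pg_points by (metis pg_pointsE subsetD)
  with assms show ?thesis using pg_line_eq_cross by metis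
qed

lemma pg_line_exists:
  assumes "P \<in> pg_points" "Q \<in> pg_points" "P \<noteq> Q"
  shows "\<exists>l\<in>pg_lines. P \<in> l \<and> Q \<in> (l :: ('a::field^3) set set)"
  using assms pg_line_cross by (metis pg_pointsE)

lemma pg_line_decompose:
  fixes x y z :: "'a::field^3"
  assumes "x \<noteq> 0" "y \<noteq> 0" "pg_point x \<noteq> pg_point y" "dot3 (cross x y) z = 0"
  shows "\<exists>a b. z = a *s x + b *s y"
proof -
  obtain i where i: "cross x y $ i \<noteq> 0" using cross_neq_0[OF assms(1-3)] by (auto simp: vec_eq_iff)
  have "dot3 (cross x y) (axis i 1) = cross x y $ i"
    unfolding dot3_def axis_def by (simp add: if_distrib cong: if_cong)
  with cramer_3[of x y "axis i 1" z] assms(4)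
  have "cross x y $ i *s z = dot3 (cross z y) (axis i 1) *s x + dot3 (cross x z) (axis i 1) *s y"
    by simp
  with i have "z = (dot3 (cross z y) (axis i 1) / cross x y $ i) *s x
      + (dot3 (cross x z) (axis i 1) / cross x y $ i) *s y"
    by (simp add: vec_eq_iff field_simps)
  then show ?thesis by blast
qed

lemma pg_points_independent:
  fixes x y :: "'a::field^3"
  assumes "x \<noteq> 0" "y \<noteq> 0" "pg_point x \<noteq> pg_point y" "a *s x + b *s y = 0"
  shows "a = 0 \<and> b = 0"
proof -
  have "b = 0"
  proof (rule ccontr)
    assume b: "b \<noteq> 0"
    from assms(4) have "y = (- a / b) *s x"
      using b by (simp add: vec_eq_iff field_simps) (metis add_eq_0_iff mult.commute)
    moreover have "- a / b \<noteq> 0" using calculation assms by auto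
    ultimately show False using pg_point_eq_iff[OF assms(1)] assms(3) by blast
  qed
  with assms show ?thesis by simp
qed

lemma pg_line_card_ge: "\<exists>l\<in>(pg_lines :: ('a::{field,finite}^3) set set set). CARD('a) + 1 \<le> card l"
proof -
  define P :: "'a \<Rightarrow> ('a^3) set" where "P t = pg_point (vector [1,t,0])" for t
  define P_inf :: "('a^3) set" where "P_inf = pg_point (vector [0,1,0])"
  have nz: "(vector [1,t,0] :: 'a^3) \<noteq> 0" "(vector [0,1,0] :: 'a^3) \<noteq> 0" for t
    by (simp_all add: vec3_eq_iff)
  have "inj P"
    by (rule injI) (auto simp: P_def pg_point_eq_iff[OF nz(1)] vec3_eq_iff)
  moreover have "P_inf \<notin> range P"
    by (auto simp: P_def P_inf_def pg_point_eq_iff[OF nz(2)] vec3_eq_iff)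
  ultimately have "card (insert P_inf (range P)) = CARD('a) + 1"
    by (simp add: card_image)
  moreover have "insert P_inf (range P) \<subseteq> pg_line (vector [0,0,1])"
    using nz unfolding P_def P_inf_def by (auto simp: pg_point_in_pg_line_iff dot3_expand)
  moreover have "pg_line (vector [0,0,1]) \<in> pg_lines"
    unfolding pg_lines_def by (auto simp: vec3_eq_iff)
  ultimately show ?thesis using card_mono[OF finite] by metis
qed

section \<open>Secants and maximal arcs\<close>

definition collinear_pairs :: "('a::field^3) set set \<Rightarrow> ('a^3) set \<Rightarrow> ('a^3) set set set" where
  "collinear_pairs S Q = {B. B \<subseteq> S \<and> card B = 2 \<and> (\<exists>l\<in>pg_lines. Q \<in> l \<and> B \<subseteq> l)}"

lemma secant_mult_eq_card_collinear_pairs: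
  fixes S :: "('a::{field,finite}^3) set set"
  shows "secant_mult S Q = card (collinear_pairs S Q)"
proof -
  define L where "L = {l\<in>pg_lines. Q \<in> l \<and> card (l \<inter> S) \<ge> 2}"
  define pairs where "pairs l = {B. B \<subseteq> l \<inter> S \<and> card B = 2}" for l :: "('a^3) set set"
  have "collinear_pairs S Q = (\<Union>l\<in>L. pairs l)"
  proof (intro equalityI subsetI)
    fix B assume "B \<in> collinear_pairs S Q"
    then obtain l where l: "l \<in> pg_lines" "Q \<in> l" "B \<subseteq> l \<inter> S" "card B = 2"
      unfolding collinear_pairs_def by auto
    then have "l \<in> L" using card_mono[OF finite l(3)] unfolding L_def by auto
    with l show "B \<in> (\<Union>l\<in>L. pairs l)" unfolding pairs_def by auto
  qed (auto simp: collinear_pairs_def L_def pairs_def)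
  moreover have "pairs l \<inter> pairs l' = {}" if "l \<in> L" "l' \<in> L" "l \<noteq> l'" for l l'
  proof (rule ccontr)
    assume "pairs l \<inter> pairs l' \<noteq> {}"
    then obtain P P' where "P \<noteq> P'" "{P, P'} \<subseteq> l \<inter> l'"
      unfolding pairs_def by (auto simp: card_2_iff)
    with that show False using pg_lines_eq[of l l' P P'] unfolding L_def by auto
  qed
  ultimately have "card (collinear_pairs S Q) = (\<Sum>l\<in>L. card (pairs l))"
    by (simp add: card_UN_disjoint)
  also have "\<dots> = secant_mult S Q"
    unfolding secant_mult_def L_def[symmetric] pairs_def by (intro sum.cong refl n_subsets finite)
  finally show ?thesis ..
qed

lemma collinear_pair_decompose:
  fixes x y z :: "'a::field^3"
  assumes "{pg_point x, pg_point y} \<in> collinear_pairs S (pg_point z)"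
    and "x \<noteq> 0" "y \<noteq> 0" "z \<noteq> 0"
  shows "\<exists>a b. z = a *s x + b *s y"
proof -
  obtain l where l: "l \<in> pg_lines" "pg_point z \<in> l" "pg_point x \<in> l" "pg_point y \<in> l"
    using assms(1) unfolding collinear_pairs_def by auto
  have xy: "pg_point x \<noteq> pg_point y" using assms(1) unfolding collinear_pairs_def by auto
  have "pg_point z \<in> pg_line (cross x y)"
    using l pg_line_eq_cross[OF assms(2,3) xy] by simp
  then show ?thesis using pg_line_decompose[OF assms(2,3) xy] pg_point_in_pg_line_iff[OF assms(4)] by simp
qed

lemma pg_spans_if_collinear_pairs:
  fixes S :: "('a::field^3) set set"
  assumes "\<forall>Q\<in>pg_points - S. collinear_pairs S Q \<noteq> {}"
  shows "pg_spans S"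
  unfolding pg_spans_def
proof
  fix z :: "'a^3"
  consider "z = 0" | "z \<noteq> 0" "pg_point z \<in> S" | "z \<noteq> 0" "pg_point z \<notin> S" by blast
  then show "\<exists>X c. finite X \<and> X \<subseteq> \<Union>S \<and> z = (\<Sum>x\<in>X. c x *s x)"
  proof cases
    case 1
    then show ?thesis by (intro exI[of _ "{}"]) auto
  next
    case 2
    then show ?thesis using pg_point_self[of z] by (intro exI[of _ "{z}"] exI[of _ "\<lambda>_. 1"]) auto
  next
    case 3
    then obtain B where B: "B \<in> collinear_pairs S (pg_point z)"
      using assms pg_point_in_pg_points by blast
    then have "B \<subseteq> S \<and> card B = 2 \<and> (\<exists>l\<in>pg_lines. pg_point z \<in> l \<and> B \<subseteq> l)"
      by (simp add: collinear_pairs_def)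
    then obtain l where l: "B \<subseteq> S" "card B = 2" "l \<in> pg_lines" "B \<subseteq> l" by blast
    then obtain P P' where PP': "B = {P, P'}" by (meson card_2_iff)
    have "B \<subseteq> pg_points" using l pg_line_subset_pg_points by blast
    then obtain x y where "x \<noteq> 0" "P = pg_point x" "y \<noteq> 0" "P' = pg_point y"
      unfolding PP' by (meson insert_subset pg_pointsE)
    with PP' l have xy: "x \<noteq> 0" "y \<noteq> 0" "{pg_point x, pg_point y} = B"
      "pg_point x \<in> S" "pg_point y \<in> S"
      by auto
    have "{pg_point x, pg_point y} \<in> collinear_pairs S (pg_point z)" using B xy(3) by simp
    from collinear_pair_decompose[OF this xy(1,2) 3(1)]
    obtain a b where "z = a *s x + b *s y" by blast
    moreover have "x \<noteq> y" using l(2) xy(3) by force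
    ultimately show ?thesis using xy pg_point_self[of x] pg_point_self[of y]
      by (intro exI[of _ "{x, y}"] exI[of _ "\<lambda>w. if w = x then a else b"]) auto
  qed
qed

lemma pg_spans_dot3_eq_0:
  assumes "pg_spans S" "\<And>x. x \<in> \<Union>S \<Longrightarrow> dot3 w x = 0"
  shows "dot3 w v = 0"
proof -
  obtain X c where X: "X \<subseteq> \<Union>S" "v = (\<Sum>x\<in>X. c x *s x)"
    using assms(1) unfolding pg_spans_def by blast
  have "\<forall>x\<in>X. dot3 w x = 0" using X(1) assms(2) by blast
  with X(2) show ?thesis by (simp add: dot3_sum)
qed

text \<open>A linear functional vanishing on a spanning set vanishes identically; applied once per
  argument of the (trilinear, cyclic) determinant it shows that a spanning set contains three
  vectors with nonzero determinant.\<close>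
lemma pg_spans_det_neq_0:
  fixes S :: "('a::field^3) set set"
  assumes spans: "pg_spans S"
  shows "\<exists>x\<in>\<Union>S. \<exists>y\<in>\<Union>S. \<exists>z\<in>\<Union>S. dot3 (cross x y) z \<noteq> 0"
proof (rule ccontr)
  assume "\<not> ?thesis"
  then have vanish1: "dot3 (cross y z) x = 0" if "x \<in> \<Union>S" "y \<in> \<Union>S" "z \<in> \<Union>S" for x y z
    using that dot3_cross_cycle[of x y z] by auto
  have vanish2: "dot3 (cross z v) y = 0" if "y \<in> \<Union>S" "z \<in> \<Union>S" for y z v
  proof -
    have "dot3 (cross y z) v = 0" by (rule pg_spans_dot3_eq_0[OF spans]) (use that vanish1 in auto)
    then show ?thesis using dot3_cross_cycle[of y z v] by simp
  qed
  have vanish3: "dot3 (cross v u) z = 0" if "z \<in> \<Union>S" for z u v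
  proof -
    have "dot3 (cross z v) u = 0" by (rule pg_spans_dot3_eq_0[OF spans]) (use that vanish2 in auto)
    then show ?thesis using dot3_cross_cycle[of z v u] by simp
  qed
  have "dot3 (cross v u) t = 0" for t u v :: "'a^3"
    by (rule pg_spans_dot3_eq_0[OF spans]) (rule vanish3)
  moreover have "dot3 (cross (axis 1 1) (axis 2 1)) (axis 3 (1::'a)) = 1"
    by (simp add: dot3_expand axis_def)
  ultimately show False by simp
qed

lemma maximal_arc_line_card:
  assumes "maximal_arc K n s" "l \<in> pg_lines" "P \<in> l" "P \<in> K"
  shows "card (l \<inter> K) = s"
  using assms unfolding maximal_arc_def by (metis card_0_eq disjoint_iff finite_Int)

lemma maximal_arc_secant_mult:
  fixes K :: "('a::{field,finite}^3) set set"
  assumes arc: "maximal_arc K n s" and "2 \<le> s" and Q: "Q \<in> pg_points" "Q \<notin> K"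
  shows "2 * secant_mult K Q = (s - 1) * n"
proof -
  define L where "L = {l\<in>pg_lines. Q \<in> l \<and> card (l \<inter> K) \<ge> 2}"
  have card_L: "card (l \<inter> K) = s" if "l \<in> L" for l
    using that assms(2) arc unfolding L_def maximal_arc_def by auto
  have "K \<subseteq> (\<Union>l\<in>L. l \<inter> K)"
  proof
    fix P assume P: "P \<in> K"
    with Q arc obtain l where l: "l \<in> pg_lines" "P \<in> l" "Q \<in> l"
      using pg_line_exists[of P Q] unfolding maximal_arc_def by auto
    with P have "l \<in> L" using maximal_arc_line_card[OF arc] assms(2) unfolding L_def by auto
    with l P show "P \<in> (\<Union>l\<in>L. l \<inter> K)" by auto
  qed
  then have K_eq: "(\<Union>l\<in>L. l \<inter> K) = K" by auto
  have "(l \<inter> K) \<inter> (l' \<inter> K) = {}" if "l \<in> L" "l' \<in> L" "l \<noteq> l'" for l l'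
    using that pg_lines_eq[of l l' _ Q] Q unfolding L_def by auto
  then have "card (\<Union>l\<in>L. l \<inter> K) = (\<Sum>l\<in>L. card (l \<inter> K))"
    by (intro card_UN_disjoint) auto
  then have "n = card L * s" using arc card_L K_eq unfolding maximal_arc_def by simp
  moreover have "secant_mult K Q = card L * (s choose 2)"
    using card_L unfolding secant_mult_def L_def[symmetric] by simp
  moreover have "2 * (s choose 2) = s * (s - 1)" using times_binomial_minus1_eq[of 2 s] by simp
  ultimately show ?thesis by (metis mult.assoc mult.commute)
qed

lemma maximal_arc_neq_pg_points:
  fixes K :: "('a::{field,finite}^3) set set"
  assumes "maximal_arc K n s" "s \<le> CARD('a)"
  shows "K \<noteq> pg_points"
proof
  assume "K = pg_points"
  moreover obtain l :: "('a^3) set set" where l: "l \<in> pg_lines" "CARD('a) + 1 \<le> card l"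
    using pg_line_card_ge by blast
  ultimately have "l \<inter> K = l" using pg_line_subset_pg_points by blast
  with assms l show False unfolding maximal_arc_def by fastforce
qed

lemma maximal_arc_optimal_saturating:
  fixes K :: "('a::{field,finite}^3) set set"
  assumes arc: "maximal_arc K n s" and "2 \<le> s" "s \<le> CARD('a)" "0 < n"
  shows "optimal_saturating_1_mu K (((s - 1) * n) div 2) n"
proof -
  have twice: "2 * secant_mult K Q = (s - 1) * n" if "Q \<in> pg_points - K" for Q
    using maximal_arc_secant_mult[OF arc assms(2)] that by blast
  then have secant_mult: "secant_mult K Q = ((s - 1) * n) div 2" if "Q \<in> pg_points - K" for Q
    using that by (metis nonzero_mult_div_cancel_left zero_neq_numeral)
  have "collinear_pairs K Q \<noteq> {}" if "Q \<in> pg_points - K" for Q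
    using twice[OF that] secant_mult_eq_card_collinear_pairs[of K Q] assms(2,4) by fastforce
  then have "pg_spans K" by (intro pg_spans_if_collinear_pairs) blast
  then show ?thesis
    using arc secant_mult maximal_arc_neq_pg_points[OF arc assms(3)]
    unfolding optimal_saturating_1_mu_def saturating_1_mu_def maximal_arc_def by auto
qed

section \<open>Parity-check codes\<close>

definition syndrome :: "nat \<Rightarrow> (nat \<Rightarrow> 'a::field^3) \<Rightarrow> (nat \<Rightarrow> 'a) \<Rightarrow> 'a^3" where
  "syndrome n h x = (\<Sum>i<n. x i *s h i)"

definition support :: "nat \<Rightarrow> (nat \<Rightarrow> 'a::zero) \<Rightarrow> nat set" where
  "support n x = {i. i < n \<and> x i \<noteq> 0}"

definition weight :: "nat \<Rightarrow> (nat \<Rightarrow> 'a::zero) \<Rightarrow> nat" where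
  "weight n x = card (support n x)"

definition unit_word :: "nat \<Rightarrow> 'a::zero \<Rightarrow> nat \<Rightarrow> 'a" where
  "unit_word i a = (\<lambda>j. if j = i then a else 0)"

lemma parity_code_eq: "parity_code n h = {x \<in> words n. syndrome n h x = 0}"
  unfolding parity_code_def syndrome_def ..

lemma hamming_eq_weight: "hamming n x y = weight n (x - (y :: nat \<Rightarrow> 'a::ab_group_add))"
  unfolding hamming_def weight_def support_def by simp

lemma support_subset: "support n x \<subseteq> {..<n}"
  unfolding support_def by auto

lemma finite_support [simp]: "finite (support n x)"
  unfolding support_def by auto

lemma sum_fun_apply: "(\<Sum>j\<in>A. f j) k = (\<Sum>j\<in>A. f j k)"
  by (induction A rule: infinite_finite_induct) auto

lemma words_zero [simp]: "0 \<in> words n"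
  and words_add: "x \<in> words n \<Longrightarrow> y \<in> words n \<Longrightarrow> x + y \<in> words n"
  and words_diff: "x \<in> words n \<Longrightarrow> y \<in> words n \<Longrightarrow> x - y \<in> words n"
  and words_wscale: "x \<in> words n \<Longrightarrow> wscale c x \<in> words n"
  and words_unit_word: "i < n \<Longrightarrow> unit_word i a \<in> words n"
  for x y :: "nat \<Rightarrow> 'b::field"
  unfolding words_def wscale_def unit_word_def by auto

lemma words_eq_0_if_support_empty:
  assumes "x \<in> words n" "support n x = {}"
  shows "x = 0"
proof
  fix i show "x i = 0 i"
    using assms unfolding words_def support_def by (cases "i < n") auto
qed

lemma finite_words: "finite (words n :: (nat \<Rightarrow> 'a::{zero,finite}) set)"
proof -
  have "inj_on (\<lambda>x. restrict x {..<n}) (words n)"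
  proof (rule inj_onI, rule ext)
    fix x y i assume "x \<in> words n" "y \<in> words n" "restrict x {..<n} = restrict y {..<n}"
    then show "x i = y i" unfolding words_def by (cases "i < n") (auto dest: fun_cong[of _ _ i])
  qed
  moreover have "(\<lambda>x. restrict x {..<n}) ` words n \<subseteq> PiE {..<n} (\<lambda>_. UNIV)"
    by (simp only: image_subset_iff restrict_PiE_iff) simp
  moreover have "finite (PiE {..<n} (\<lambda>_. UNIV :: 'a set))" by (rule finite_PiE) auto
  ultimately show ?thesis using finite_subset finite_imageD by blast
qed

lemma vector_space_wscale: "vector_space (wscale :: 'a::field \<Rightarrow> (nat \<Rightarrow> 'a) \<Rightarrow> nat \<Rightarrow> 'a)"
  by unfold_locales (simp_all add: wscale_def fun_eq_iff algebra_simps)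

lemma syndrome_nth: "syndrome n h x $ k = (\<Sum>i<n. x i * h i $ k)"
  unfolding syndrome_def by simp

lemma syndrome_add: "syndrome n h (x + y) = syndrome n h x + syndrome n h y"
  and syndrome_diff: "syndrome n h (x - y) = syndrome n h x - syndrome n h y"
  and syndrome_wscale: "syndrome n h (wscale c x) = c *s syndrome n h x"
  and syndrome_zero [simp]: "syndrome n h 0 = 0"
  by (simp_all add: vec_eq_iff syndrome_nth wscale_def algebra_simps sum.distrib sum_subtractf
      sum_distrib_left)

lemma syndrome_eq_sum_over:
  assumes "support n x \<subseteq> S" "S \<subseteq> {..<n}"
  shows "syndrome n h x = (\<Sum>i\<in>S. x i *s h i)"
  unfolding syndrome_def
  by (rule sum.mono_neutral_right) (use assms in \<open>auto simp: support_def\<close>)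

lemma support_unit_word: "support n (unit_word i a) \<subseteq> {i}"
  unfolding support_def unit_word_def by auto

lemma syndrome_unit_word: "i < n \<Longrightarrow> syndrome n h (unit_word i a) = a *s h i"
  by (subst syndrome_eq_sum_over[of _ _ "{i}"]) (auto simp: support_def unit_word_def)

lemma finite_parity_code: "finite (parity_code n (h :: nat \<Rightarrow> 'a::{field,finite}^3))"
  using finite_words by (rule rev_finite_subset) (auto simp: parity_code_eq)

lemma dist_to_parity_code_le_iff:
  fixes h :: "nat \<Rightarrow> 'a::{field,finite}^3"
  assumes "x \<in> words n"
  shows "dist_to_code n (parity_code n h) x \<le> d \<longleftrightarrow>
    (\<exists>e\<in>words n. weight n e \<le> d \<and> syndrome n h e = syndrome n h x)"
proof -
  have "0 \<in> parity_code n h" by (simp add: parity_code_eq)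
  then have "dist_to_code n (parity_code n h) x \<le> d \<longleftrightarrow> (\<exists>c\<in>parity_code n h. weight n (x - c) \<le> d)"
    unfolding dist_to_code_def
    by (subst Min_le_iff) (auto simp: finite_parity_code hamming_eq_weight)
  also have "\<dots> \<longleftrightarrow> (\<exists>e\<in>words n. weight n e \<le> d \<and> syndrome n h e = syndrome n h x)"
  proof
    assume "\<exists>c\<in>parity_code n h. weight n (x - c) \<le> d"
    then show "\<exists>e\<in>words n. weight n e \<le> d \<and> syndrome n h e = syndrome n h x"
      using assms by (auto simp: parity_code_eq syndrome_diff intro: words_diff)
  next
    assume "\<exists>e\<in>words n. weight n e \<le> d \<and> syndrome n h e = syndrome n h x"
    then obtain e where "e \<in> words n" "weight n e \<le> d" "syndrome n h e = syndrome n h x" by blast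
    with assms show "\<exists>c\<in>parity_code n h. weight n (x - c) \<le> d"
      by (intro bexI[of _ "x - e"]) (auto simp: parity_code_eq syndrome_diff intro: words_diff)
  qed
  finally show ?thesis .
qed

lemma card_parity_codewords_at_distance:
  assumes "x \<in> words n"
  shows "card {c \<in> parity_code n h. hamming n x c = d} =
    card {e \<in> words n. weight n e = d \<and> syndrome n h e = syndrome n h x}"
  by (rule bij_betw_same_card[of "\<lambda>c. x - c"], rule bij_betw_byWitness[of _ "\<lambda>e. x - e"])
    (use assms in \<open>auto simp: parity_code_eq hamming_eq_weight syndrome_diff intro: words_diff\<close>)

lemma syndrome_weight_le_1:
  assumes "e \<in> words n" "weight n e \<le> 1"
  shows "syndrome n h e = 0 \<or> (\<exists>i<n. syndrome n h e = e i *s h i)"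
proof (cases "support n e = {}")
  case True
  then show ?thesis using words_eq_0_if_support_empty[OF assms(1)] by simp
next
  case False
  with assms(2) obtain i where "support n e = {i}"
    unfolding weight_def by (metis card_0_eq card_1_singletonE finite_support le_SucE le_zero_eq One_nat_def)
  then show ?thesis using syndrome_eq_sum_over[of n e "{i}" h] support_subset[of n e] by auto
qed

lemma syndrome_weight_2:
  assumes "weight n e = 2"
  obtains i j where "i < n" "j < n" "i \<noteq> j" "support n e = {i, j}"
    "syndrome n h e = e i *s h i + e j *s h j"
proof -
  obtain i j where ij: "support n e = {i, j}" "i \<noteq> j"
    using assms unfolding weight_def by (meson card_2_iff)
  moreover have "i < n" "j < n" using ij(1) support_subset[of n e] by auto
  ultimately show ?thesis using that syndrome_eq_sum_over[of n e "{i, j}" h] by auto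
qed

lemma weight_le_card: "support n x \<subseteq> A \<Longrightarrow> finite A \<Longrightarrow> weight n x \<le> card A"
  unfolding weight_def by (rule card_mono)

lemma word_of_two_columns:
  fixes h :: "nat \<Rightarrow> 'a::field^3"
  assumes "i < n" "j < n"
  shows "unit_word i a + unit_word j b \<in> words n"
    and "syndrome n h (unit_word i a + unit_word j b) = a *s h i + b *s h j"
    and "weight n (unit_word i a + unit_word j b) \<le> 2"
proof -
  show "unit_word i a + unit_word j b \<in> words n"
    using assms by (simp add: words_add words_unit_word)
  show "syndrome n h (unit_word i a + unit_word j b) = a *s h i + b *s h j"
    using assms by (simp add: syndrome_add syndrome_unit_word)
  have "support n (unit_word i a + unit_word j b) \<subseteq> {i, j}"
    unfolding support_def unit_word_def by auto
  moreover have "card {i, j} \<le> 2" by (cases "i = j") auto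
  ultimately show "weight n (unit_word i a + unit_word j b) \<le> 2"
    using weight_le_card[of n _ "{i, j}"] by fastforce
qed

lemma code_dim_eq_card_information_set:
  fixes C :: "(nat \<Rightarrow> 'a::field) set" and u :: "nat \<Rightarrow> nat \<Rightarrow> 'a"
  assumes subspace: "module.subspace wscale C" and "finite J"
    and u_in: "\<And>j. j \<in> J \<Longrightarrow> u j \<in> C"
    and u_val: "\<And>j k. j \<in> J \<Longrightarrow> k \<in> J \<Longrightarrow> u j k = (if k = j then 1 else 0)"
    and determined: "\<And>x. x \<in> C \<Longrightarrow> (\<forall>k\<in>J. x k = 0) \<Longrightarrow> x = 0"
  shows "code_dim C = card J"
proof -
  interpret vs: vector_space "wscale :: 'a \<Rightarrow> (nat \<Rightarrow> 'a) \<Rightarrow> nat \<Rightarrow> 'a"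
    by (rule vector_space_wscale)
  have u_inj: "inj_on u J"
    by (rule inj_onI) (metis u_val one_neq_zero)
  have coord: "(\<Sum>j\<in>J. wscale (f j) (u j)) k = f k" if "k \<in> J" for f k
  proof -
    have "(\<Sum>j\<in>J. wscale (f j) (u j)) k = (\<Sum>j\<in>J. if j = k then f j else 0)"
      unfolding sum_fun_apply wscale_def using that by (intro sum.cong) (auto simp: u_val)
    also have "\<dots> = f k" using that \<open>finite J\<close> by simp
    finally show ?thesis .
  qed
  have "vs.independent (u ` J)"
  proof (rule vs.independent_if_scalars_zero)
    show "finite (u ` J)" using \<open>finite J\<close> by simp
  next
    fix f v assume sum0: "(\<Sum>x\<in>u ` J. wscale (f x) x) = 0" and "v \<in> u ` J"
    then obtain j where j: "j \<in> J" "v = u j" by auto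
    have "(\<Sum>i\<in>J. wscale (f (u i)) (u i)) = 0"
      using sum0 by (simp add: sum.reindex[OF u_inj])
    then show "f v = 0" using coord[OF j(1), of "f \<circ> u"] j by simp
  qed
  moreover have "vs.span (u ` J) = C"
  proof (rule vs.span_subspace)
    show "u ` J \<subseteq> C" using u_in by auto
    show "C \<subseteq> vs.span (u ` J)"
    proof
      fix x assume x: "x \<in> C"
      have "x - (\<Sum>j\<in>J. wscale (x j) (u j)) \<in> C"
        using x u_in by (intro vs.subspace_diff[OF subspace] vs.subspace_sum[OF subspace]
            vs.subspace_scale[OF subspace]) auto
      moreover have "\<forall>k\<in>J. (x - (\<Sum>j\<in>J. wscale (x j) (u j))) k = 0"
        using coord by simp
      ultimately have "x = (\<Sum>j\<in>J. wscale (x j) (u j))" using determined by fastforce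
      also have "\<dots> \<in> vs.span (u ` J)"
        by (intro vs.span_sum vs.span_scale vs.span_base) auto
      finally show "x \<in> vs.span (u ` J)" .
    qed
  qed (rule subspace)
  ultimately have "vs.dim C = card (u ` J)" using vs.dim_span_eq_card_independent by metis
  then show ?thesis unfolding code_dim_def using card_image[OF u_inj] by simp
qed

lemma parity_code_subspace: "module.subspace wscale (parity_code n h)"
proof -
  interpret vs: vector_space "wscale :: 'a \<Rightarrow> (nat \<Rightarrow> 'a) \<Rightarrow> nat \<Rightarrow> 'a"
    by (rule vector_space_wscale)
  show ?thesis
    by (rule vs.subspaceI)
      (auto simp: parity_code_eq words_add words_wscale syndrome_add syndrome_wscale)
qed

text \<open>The coordinates outside \<open>{a, b, c}\<close> form an information set: by Cramer's rule, the
  unit word at \<open>j\<close> is completed to a codeword by suitable entries at \<open>a\<close>, \<open>b\<close>, \<open>c\<close>.\<close>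

lemma parity_code_dim:
  fixes h :: "nat \<Rightarrow> 'a::field^3"
  assumes abc: "a < n" "b < n" "c < n" and D: "dot3 (cross (h a) (h b)) (h c) \<noteq> 0"
  shows "code_dim (parity_code n h) = n - 3"
proof -
  define D where "D = dot3 (cross (h a) (h b)) (h c)"
  define J where "J = {..<n} - {a, b, c}"
  define u where "u j = unit_word j 1 - unit_word a (dot3 (cross (h j) (h b)) (h c) / D)
    - unit_word b (dot3 (cross (h a) (h j)) (h c) / D)
    - unit_word c (dot3 (cross (h a) (h b)) (h j) / D)" for j
  have distinct: "a \<noteq> b" "b \<noteq> c" "a \<noteq> c"
    using D dot3_cross_self[of "h a" "h b"] by auto
  have "card J = n - 3" unfolding J_def using abc distinct by (simp add: card_Diff_subset)
  moreover have "code_dim (parity_code n h) = card J"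
  proof (rule code_dim_eq_card_information_set[OF parity_code_subspace, of J u])
    show "finite J" unfolding J_def by simp
  next
    fix j k assume "j \<in> J" "k \<in> J"
    then show "u j k = (if k = j then 1 else 0)" unfolding u_def J_def unit_word_def by auto
  next
    fix j assume j: "j \<in> J"
    then have "u j \<in> words n" unfolding u_def J_def using abc
      by (simp add: words_diff words_unit_word)
    moreover have "syndrome n h (u j) = 0"
    proof -
      let ?A = "dot3 (cross (h j) (h b)) (h c)" and ?B = "dot3 (cross (h a) (h j)) (h c)"
        and ?C = "dot3 (cross (h a) (h b)) (h j)"
      have "syndrome n h (u j) = h j - (?A / D) *s h a - (?B / D) *s h b - (?C / D) *s h c"
        unfolding u_def using j abc by (simp add: J_def syndrome_diff syndrome_unit_word)
      also have "\<dots> = 0"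
        using cramer_3[of "h a" "h b" "h c" "h j"] D unfolding D_def
        by (simp add: vec_eq_iff field_simps)
      finally show ?thesis .
    qed
    ultimately show "u j \<in> parity_code n h" by (simp add: parity_code_eq)
  next
    fix x assume x: "x \<in> parity_code n h" and zero_on_J: "\<forall>k\<in>J. x k = 0"
    then have "support n x \<subseteq> {a, b, c}" unfolding J_def support_def by auto
    then have "x a *s h a + x b *s h b + x c *s h c = 0"
      using x syndrome_eq_sum_over[of n x "{a, b, c}" h] abc distinct
      by (simp add: parity_code_eq add.assoc)
    then have "x a = 0 \<and> x b = 0 \<and> x c = 0" using det3_independent D by blast
    then have "support n x = {}" using \<open>support n x \<subseteq> {a, b, c}\<close> unfolding support_def by auto
    then show "x = 0" using x words_eq_0_if_support_empty by (auto simp: parity_code_eq)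
  qed
  ultimately show ?thesis by simp
qed

lemma nonzero_codeword_exists:
  assumes "0 < code_dim (parity_code n h)"
  shows "\<exists>c\<in>parity_code n h. c \<noteq> 0"
proof (rule ccontr)
  interpret vs: vector_space "wscale :: 'a \<Rightarrow> (nat \<Rightarrow> 'a) \<Rightarrow> nat \<Rightarrow> 'a"
    by (rule vector_space_wscale)
  assume "\<not> ?thesis"
  then have "parity_code n h \<subseteq> vs.span {}" by auto
  then have "vs.dim (parity_code n h) = 0" using vs.dim_le_card[of _ "{}"] by simp
  with assms show False unfolding code_dim_def by simp
qed

text \<open>The nonzero codeword is needed: otherwise \<open>min_distance\<close> is the minimum of the empty set.\<close>

lemma parity_code_min_distance_ge:
  fixes h :: "nat \<Rightarrow> 'a::{field,finite}^3"
  assumes nonzero: "\<exists>c\<in>parity_code n h. c \<noteq> 0"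
    and weight: "\<And>c. c \<in> parity_code n h \<Longrightarrow> c \<noteq> 0 \<Longrightarrow> d \<le> weight n c"
  shows "d \<le> min_distance n (parity_code n h)"
proof -
  let ?C = "parity_code n h"
  define M where "M = {hamming n c c' | c c'. c \<in> ?C \<and> c' \<in> ?C \<and> c \<noteq> c'}"
  have "M \<subseteq> (\<lambda>(c, c'). hamming n c c') ` (?C \<times> ?C)" unfolding M_def by auto
  then have "finite M" using finite_parity_code by (meson finite_SigmaI finite_imageI finite_subset)
  moreover have "M \<noteq> {}" using nonzero unfolding M_def by (force simp: parity_code_eq)
  moreover have "d \<le> m" if m: "m \<in> M" for m
  proof -
    obtain c c' where "c \<in> ?C" "c' \<in> ?C" "c \<noteq> c'" "m = weight n (c - c')"
      using m unfolding M_def hamming_eq_weight by blast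
    moreover have "c - c' \<in> ?C" using calculation
      by (auto simp: parity_code_eq syndrome_diff intro: words_diff)
    ultimately show ?thesis using weight by simp
  qed
  ultimately show ?thesis unfolding min_distance_def M_def[symmetric] by simp
qed

section \<open>Codes of point sets\<close>

locale point_set_code =
  fixes n :: nat and h :: "nat \<Rightarrow> 'a::{field,finite}^3" and S :: "('a^3) set set"
  assumes corr: "corresponds n h S"
begin

definition column_points :: "(nat \<Rightarrow> 'a) \<Rightarrow> ('a^3) set set" where
  "column_points e = (\<lambda>i. pg_point (h i)) ` support n e"

lemma column_neq_0: "i < n \<Longrightarrow> h i \<noteq> 0"
  using corr unfolding corresponds_def by auto

lemma column_point_in: "i < n \<Longrightarrow> pg_point (h i) \<in> S"
  using corr unfolding corresponds_def bij_betw_def by auto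

lemma column_point_inj: "i < n \<Longrightarrow> j < n \<Longrightarrow> pg_point (h i) = pg_point (h j) \<Longrightarrow> i = j"
  using corr unfolding corresponds_def bij_betw_def inj_on_def by auto

lemma point_eq_column_point:
  assumes "P \<in> S"
  obtains i where "i < n" "P = pg_point (h i)"
  using corr assms unfolding corresponds_def bij_betw_def by auto

lemma vector_eq_column_multiple:
  assumes "x \<in> \<Union>S"
  obtains i c where "i < n" "c \<noteq> 0" "x = c *s h i"
proof -
  obtain i where i: "i < n" "x \<in> pg_point (h i)"
    using assms point_eq_column_point by (metis UnionE)
  then obtain c where "c \<noteq> 0" "x = c *s h i" unfolding pg_point_def by auto
  with i(1) show ?thesis by (rule that)
qed

lemma collinear_pair_columns:
  assumes "B \<in> collinear_pairs S Q"
  obtains i j where "i < n" "j < n" "i \<noteq> j" "B = {pg_point (h i), pg_point (h j)}"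
proof -
  have B: "B \<subseteq> S" "card B = 2" using assms unfolding collinear_pairs_def by auto
  then obtain P P' where PP': "B = {P, P'}" "P \<noteq> P'" by (meson card_2_iff)
  with B(1) have "P \<in> S" "P' \<in> S" by auto
  obtain i where i: "i < n" "P = pg_point (h i)" using point_eq_column_point[OF \<open>P \<in> S\<close>] .
  obtain j where j: "j < n" "P' = pg_point (h j)" using point_eq_column_point[OF \<open>P' \<in> S\<close>] .
  from PP' i j have "i \<noteq> j" "B = {pg_point (h i), pg_point (h j)}" by auto
  with i(1) j(1) show ?thesis by (rule that)
qed

lemma column_det_neq_0:
  assumes "pg_spans S"
  obtains a b c where "a < n" "b < n" "c < n" "dot3 (cross (h a) (h b)) (h c) \<noteq> 0"
proof -
  obtain x y z where xyz: "x \<in> \<Union>S" "y \<in> \<Union>S" "z \<in> \<Union>S" and det: "dot3 (cross x y) z \<noteq> 0"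
    using pg_spans_det_neq_0[OF assms] by blast
  obtain a ca where a: "a < n" "x = ca *s h a" using vector_eq_column_multiple[OF xyz(1)] .
  obtain b cb where b: "b < n" "y = cb *s h b" using vector_eq_column_multiple[OF xyz(2)] .
  obtain c cc where c: "c < n" "z = cc *s h c" using vector_eq_column_multiple[OF xyz(3)] .
  from det have "ca * cb * cc * dot3 (cross (h a) (h b)) (h c) \<noteq> 0"
    by (simp only: a(2) b(2) c(2) dot3_cross_smult not_False_eq_True)
  then have "dot3 (cross (h a) (h b)) (h c) \<noteq> 0" by simp
  with a(1) b(1) c(1) show ?thesis by (rule that)
qed

lemma code_dim_if_pg_spans: "pg_spans S \<Longrightarrow> code_dim (parity_code n h) = n - 3"
  by (metis column_det_neq_0 parity_code_dim)

lemma dist_to_code_le_1_iff: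
  assumes x: "x \<in> words n"
  shows "dist_to_code n (parity_code n h) x \<le> 1 \<longleftrightarrow>
    syndrome n h x = 0 \<or> pg_point (syndrome n h x) \<in> S"
  (is "_ \<longleftrightarrow> ?\<sigma> = 0 \<or> _")
proof -
  have "(\<exists>e\<in>words n. weight n e \<le> 1 \<and> syndrome n h e = ?\<sigma>) \<longleftrightarrow> ?\<sigma> = 0 \<or> pg_point ?\<sigma> \<in> S"
  proof
    assume "\<exists>e\<in>words n. weight n e \<le> 1 \<and> syndrome n h e = ?\<sigma>"
    then obtain e where "e \<in> words n" "weight n e \<le> 1" "syndrome n h e = ?\<sigma>" by blast
    then have "?\<sigma> = 0 \<or> (\<exists>i<n. ?\<sigma> = e i *s h i)" using syndrome_weight_le_1 by metis
    then show "?\<sigma> = 0 \<or> pg_point ?\<sigma> \<in> S"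
      using pg_point_scale column_neq_0 column_point_in by (metis vector_smult_lzero)
  next
    assume "?\<sigma> = 0 \<or> pg_point ?\<sigma> \<in> S"
    then consider "?\<sigma> = 0" | "?\<sigma> \<in> \<Union>S" using pg_point_self by blast
    then show "\<exists>e\<in>words n. weight n e \<le> 1 \<and> syndrome n h e = ?\<sigma>"
    proof cases
      case 1
      then show ?thesis by (intro bexI[of _ 0]) (auto simp: weight_def support_def)
    next
      case 2
      then obtain i c where "i < n" "?\<sigma> = c *s h i" using vector_eq_column_multiple by metis
      moreover have "weight n (unit_word i c) \<le> 1"
        using weight_le_card[OF support_unit_word] by simp
      ultimately show ?thesis by (metis syndrome_unit_word words_unit_word)
    qed
  qed
  then show ?thesis using dist_to_parity_code_le_iff[OF x] by simp
qed

context
  assumes saturating: "\<forall>Q\<in>pg_points - S. collinear_pairs S Q \<noteq> {}"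
begin

lemma dist_to_code_le_2:
  assumes x: "x \<in> words n"
  shows "dist_to_code n (parity_code n h) x \<le> 2"
proof (cases "syndrome n h x = 0 \<or> pg_point (syndrome n h x) \<in> S")
  case True
  then show ?thesis using dist_to_code_le_1_iff[OF x] by simp
next
  case False
  let ?\<sigma> = "syndrome n h x"
  from False saturating obtain B where B: "B \<in> collinear_pairs S (pg_point ?\<sigma>)"
    using pg_point_in_pg_points by blast
  then obtain i j where ij: "i < n" "j < n" "B = {pg_point (h i), pg_point (h j)}"
    by (rule collinear_pair_columns)
  note B[unfolded ij(3)]
  then obtain a b where "?\<sigma> = a *s h i + b *s h j"
    using collinear_pair_decompose[of "h i" "h j" S ?\<sigma>] ij(1,2) column_neq_0 False by auto
  then show ?thesis
    using dist_to_parity_code_le_iff[OF x] word_of_two_columns[OF ij(1,2)] by metis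
qed

lemma dist_to_code_eq_2_iff:
  assumes "x \<in> words n"
  shows "dist_to_code n (parity_code n h) x = 2 \<longleftrightarrow>
    syndrome n h x \<noteq> 0 \<and> pg_point (syndrome n h x) \<notin> S"
  using dist_to_code_le_1_iff[OF assms] dist_to_code_le_2[OF assms] by linarith

lemma covering_radius_eq_2:
  assumes "S \<noteq> pg_points" "S \<subseteq> pg_points"
  shows "covering_radius n (parity_code n h) = 2"
  unfolding covering_radius_def
proof (rule Max_eqI)
  show "finite (dist_to_code n (parity_code n h) ` words n)" by (simp add: finite_words)
  show "d \<le> 2" if "d \<in> dist_to_code n (parity_code n h) ` words n" for d
    using that dist_to_code_le_2 by auto
  obtain Q where Q: "Q \<in> pg_points" "Q \<notin> S" using assms by blast
  then obtain y where y: "y \<noteq> 0" "Q = pg_point y" by (blast elim: pg_pointsE)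
  from Q saturating obtain B where B: "B \<in> collinear_pairs S Q" by blast
  then obtain i j where ij: "i < n" "j < n" "B = {pg_point (h i), pg_point (h j)}"
    by (rule collinear_pair_columns)
  note B[unfolded ij(3) y(2)]
  then obtain a b where "y = a *s h i + b *s h j"
    using collinear_pair_decompose[of "h i" "h j" S y] ij(1,2) column_neq_0 y(1) by auto
  then have "syndrome n h (unit_word i a + unit_word j b) = y"
    using word_of_two_columns(2)[OF ij(1,2), where h = h and a = a and b = b] by simp
  then have "dist_to_code n (parity_code n h) (unit_word i a + unit_word j b) = 2"
    using dist_to_code_eq_2_iff[OF word_of_two_columns(1)[OF ij(1,2)]] y Q by simp
  then show "2 \<in> dist_to_code n (parity_code n h) ` words n"
    using word_of_two_columns(1)[OF ij(1,2)] by force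
qed

end

lemma words_eq_if_same_two_support:
  assumes "e \<in> words n" "e' \<in> words n" "i \<noteq> j"
    and supp: "support n e = {i, j}" "support n e' = {i, j}"
    and "syndrome n h e = syndrome n h e'"
  shows "e = e'"
proof -
  have ij: "i < n" "j < n" using supp(1) support_subset[of n e] by auto
  have "syndrome n h e = e i *s h i + e j *s h j" "syndrome n h e' = e' i *s h i + e' j *s h j"
    using syndrome_eq_sum_over[of n _ "{i, j}" h] supp ij \<open>i \<noteq> j\<close> by simp_all
  with assms(6) have "(e i - e' i) *s h i + (e j - e' j) *s h j = 0"
    by (simp add: vector_sub_rdistrib algebra_simps)
  moreover have "pg_point (h i) \<noteq> pg_point (h j)" using column_point_inj ij \<open>i \<noteq> j\<close> by blast
  ultimately have "e i - e' i = 0 \<and> e j - e' j = 0"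
    using pg_points_independent[OF column_neq_0[OF ij(1)] column_neq_0[OF ij(2)]] by blast
  then have "e i = e' i" "e j = e' j" by simp_all
  show "e = e'"
  proof
    fix k
    show "e k = e' k"
    proof (cases "k \<in> {i, j}")
      case True
      with \<open>e i = e' i\<close> \<open>e j = e' j\<close> show ?thesis by auto
    next
      case False
      with supp assms(1,2) show ?thesis unfolding support_def words_def
        by (metis (mono_tags, lifting) mem_Collect_eq not_less)
    qed
  qed
qed

lemma column_points_of_weight_2_word:
  assumes "weight n e = 2" "syndrome n h e = \<sigma>" "\<sigma> \<noteq> 0"
  shows "column_points e \<in> collinear_pairs S (pg_point \<sigma>)"
proof -
  obtain i j where ij: "i < n" "j < n" "i \<noteq> j" "support n e = {i, j}"
    and "syndrome n h e = e i *s h i + e j *s h j" using assms(1) by (rule syndrome_weight_2)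
  with assms(2) have \<sigma>_eq: "\<sigma> = e i *s h i + e j *s h j" by simp
  have ij_points: "pg_point (h i) \<noteq> pg_point (h j)" using column_point_inj ij by blast
  note line = pg_line_cross[OF column_neq_0[OF ij(1)] column_neq_0[OF ij(2)] ij_points]
  have "pg_point \<sigma> \<in> pg_line (cross (h i) (h j))"
    using pg_point_in_pg_line_iff[OF assms(3)] \<sigma>_eq by simp
  moreover have "column_points e = {pg_point (h i), pg_point (h j)}"
    unfolding column_points_def using ij(4) by simp
  ultimately show ?thesis
    unfolding collinear_pairs_def using line ij_points column_point_in ij(1,2) by auto
qed

lemma weight_2_word_of_collinear_pair:
  assumes \<sigma>: "\<sigma> \<noteq> 0" "pg_point \<sigma> \<notin> S" and B: "B \<in> collinear_pairs S (pg_point \<sigma>)"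
  obtains e where "e \<in> words n" "weight n e = 2" "syndrome n h e = \<sigma>" "column_points e = B"
proof -
  obtain i j where ij: "i < n" "j < n" "i \<noteq> j" "B = {pg_point (h i), pg_point (h j)}"
    using B by (rule collinear_pair_columns)
  obtain a b where \<sigma>_eq: "\<sigma> = a *s h i + b *s h j"
    using collinear_pair_decompose[of "h i" "h j" S \<sigma>] B ij column_neq_0 \<sigma>(1) by auto
  have not_column: "\<sigma> \<noteq> c *s h k" if "k < n" for c k
  proof
    assume "\<sigma> = c *s h k"
    with \<sigma>(1) have "pg_point \<sigma> = pg_point (h k)"
      using pg_point_scale column_neq_0[OF that] by auto
    with \<sigma>(2) column_point_in[OF that] show False by simp
  qed
  have "a \<noteq> 0" "b \<noteq> 0"
    using \<sigma>_eq not_column[OF ij(1), of a] not_column[OF ij(2), of b] by auto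
  define e where "e = unit_word i a + unit_word j b"
  have "support n e = {i, j}"
    using \<open>a \<noteq> 0\<close> \<open>b \<noteq> 0\<close> ij unfolding e_def support_def unit_word_def by auto
  moreover have "e \<in> words n" unfolding e_def by (rule word_of_two_columns(1)[OF ij(1,2)])
  moreover have "syndrome n h e = \<sigma>"
    unfolding e_def \<sigma>_eq by (rule word_of_two_columns(2)[OF ij(1,2)])
  ultimately show ?thesis
    using that ij(3,4) by (simp add: weight_def column_points_def)
qed

lemma card_weight_2_words_with_syndrome:
  assumes \<sigma>: "\<sigma> \<noteq> 0" "pg_point \<sigma> \<notin> S"
  shows "card {e \<in> words n. weight n e = 2 \<and> syndrome n h e = \<sigma>} =
    card (collinear_pairs S (pg_point \<sigma>))"
proof (rule bij_betw_same_card[of column_points], rule bij_betwI')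
  let ?E = "{e \<in> words n. weight n e = 2 \<and> syndrome n h e = \<sigma>}"
  have inj: "inj_on (\<lambda>i. pg_point (h i)) {..<n}"
    by (rule inj_onI) (simp add: column_point_inj)
  fix e e' assume e: "e \<in> ?E" and e': "e' \<in> ?E"
  show "column_points e = column_points e' \<longleftrightarrow> e = e'"
  proof
    assume "column_points e = column_points e'"
    then have "(\<lambda>i. pg_point (h i)) ` support n e = (\<lambda>i. pg_point (h i)) ` support n e'"
      by (simp only: column_points_def)
    then have same: "support n e = support n e'"
      by (simp only: inj_on_image_eq_iff[OF inj support_subset support_subset])
    from e have "weight n e = 2" by simp
    then obtain i j where "i \<noteq> j" "support n e = {i, j}" by (rule syndrome_weight_2)
    with e e' same show "e = e'" using words_eq_if_same_two_support by auto
  qed simp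
next
  fix e assume "e \<in> {e \<in> words n. weight n e = 2 \<and> syndrome n h e = \<sigma>}"
  then show "column_points e \<in> collinear_pairs S (pg_point \<sigma>)"
    using column_points_of_weight_2_word \<sigma>(1) by blast
next
  fix B assume "B \<in> collinear_pairs S (pg_point \<sigma>)"
  with \<sigma> obtain e where "e \<in> words n" "weight n e = 2" "syndrome n h e = \<sigma>" "column_points e = B"
    by (rule weight_2_word_of_collinear_pair)
  then show "\<exists>e\<in>{e \<in> words n. weight n e = 2 \<and> syndrome n h e = \<sigma>}. B = column_points e"
    by blast
qed

lemma APMCF_if_optimal_saturating:
  assumes opt: "optimal_saturating_1_mu S mu n" and "0 < mu"
  shows "APMCF n (parity_code n h) 2 mu"
proof -
  have S: "S \<subseteq> pg_points" "S \<noteq> pg_points"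
    using opt unfolding optimal_saturating_1_mu_def saturating_1_mu_def by auto
  have mu: "card (collinear_pairs S Q) = mu" if "Q \<in> pg_points - S" for Q
    using opt that secant_mult_eq_card_collinear_pairs[of S Q]
    unfolding optimal_saturating_1_mu_def by auto
  then have saturating: "\<forall>Q\<in>pg_points - S. collinear_pairs S Q \<noteq> {}"
    using \<open>0 < mu\<close> by fastforce
  show ?thesis
    unfolding APMCF_def
  proof (intro conjI ballI impI)
    show "covering_radius n (parity_code n h) = 2" using covering_radius_eq_2[OF saturating S(2,1)] .
  next
    fix x assume x: "x \<in> words n" "dist_to_code n (parity_code n h) x = 2"
    then have \<sigma>: "syndrome n h x \<noteq> 0" "pg_point (syndrome n h x) \<notin> S"
      using dist_to_code_eq_2_iff[OF saturating] by auto
    then show "card {c \<in> parity_code n h. hamming n x c = 2} = mu"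
      using card_parity_codewords_at_distance[OF x(1)] card_weight_2_words_with_syndrome[OF \<sigma>]
        mu pg_point_in_pg_points[OF \<sigma>(1)] \<sigma>(2) by simp
  qed
qed

lemma min_weight_ge_4:
  assumes arc: "\<forall>l\<in>pg_lines. card (l \<inter> S) \<le> 2"
    and c: "c \<in> parity_code n h" "c \<noteq> 0"
  shows "4 \<le> weight n c"
proof (rule ccontr)
  assume "\<not> 4 \<le> weight n c"
  moreover have "support n c \<noteq> {}"
    using c words_eq_0_if_support_empty by (auto simp: parity_code_eq)
  then have "0 < card (support n c)" by (simp add: card_gt_0_iff)
  ultimately have "card (support n c) = 1 \<or> card (support n c) = 2 \<or> card (support n c) = 3"
    unfolding weight_def by linarith
  then consider "card (support n c) = 1" | "card (support n c) = 2" | "card (support n c) = 3"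
    by blast
  then show False
  proof cases
    case 1
    then obtain i where i: "support n c = {i}" by (meson card_1_singletonE)
    then have "c i *s h i = 0" "c i \<noteq> 0" "i < n"
      using c syndrome_eq_sum_over[of n c "{i}" h] support_subset[of n c]
      by (auto simp: parity_code_eq support_def)
    then show False using column_neq_0 by simp
  next
    case 2
    then have "weight n c = 2" by (simp add: weight_def)
    then obtain i j where ij: "i < n" "j < n" "i \<noteq> j" "support n c = {i, j}"
      and "syndrome n h c = c i *s h i + c j *s h j" by (rule syndrome_weight_2)
    moreover have "syndrome n h c = 0" using c(1) by (simp add: parity_code_eq)
    ultimately have "c i *s h i + c j *s h j = 0" by simp
    moreover have "pg_point (h i) \<noteq> pg_point (h j)" using column_point_inj ij by blast
    ultimately have "c i = 0"
      using pg_points_independent[OF column_neq_0[OF ij(1)] column_neq_0[OF ij(2)]] by blast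
    with ij(4) show False unfolding support_def by auto
  next
    case 3
    then obtain i j k where ijk: "support n c = {i, j, k}" "i \<noteq> j" "j \<noteq> k" "i \<noteq> k"
      by (meson card_3_iff)
    then have lt: "i < n" "j < n" "k < n" using support_subset[of n c] by auto
    have "c i *s h i + c j *s h j + c k *s h k = 0"
      using c syndrome_eq_sum_over[of n c "{i, j, k}" h] ijk lt
      by (simp add: parity_code_eq add.assoc)
    then have "dot3 (cross (h i) (h j)) (c i *s h i + c j *s h j + c k *s h k) = 0" by simp
    then have "c k * dot3 (cross (h i) (h j)) (h k) = 0" by simp
    moreover have "c k \<noteq> 0" using ijk(1) unfolding support_def by auto
    ultimately have "pg_point (h k) \<in> pg_line (cross (h i) (h j))"
      using pg_point_in_pg_line_iff[OF column_neq_0[OF lt(3)]] by simp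
    moreover have distinct: "pg_point (h i) \<noteq> pg_point (h j)" "pg_point (h j) \<noteq> pg_point (h k)"
      "pg_point (h i) \<noteq> pg_point (h k)"
      using column_point_inj lt ijk by blast+
    note line = pg_line_cross[OF column_neq_0[OF lt(1)] column_neq_0[OF lt(2)] distinct(1)]
    ultimately have three: "{pg_point (h i), pg_point (h j), pg_point (h k)} \<subseteq> pg_line (cross (h i) (h j)) \<inter> S"
      using column_point_in lt line(2,3) by auto
    have "card {pg_point (h i), pg_point (h j), pg_point (h k)} = 3" using distinct by simp
    then have "3 \<le> card (pg_line (cross (h i) (h j)) \<inter> S)"
      using card_mono[OF finite three] by simp
    moreover have "card (pg_line (cross (h i) (h j)) \<inter> S) \<le> 2" using arc line(1) by blast
    ultimately show False by simp
  qed
qed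

end

theorem proposition5p1:
  fixes K :: "('a::{field,finite} ^ 3) set set"
    and v k q s n mu :: nat
  assumes "CARD('a) = q" and "q = 2 ^ v"
    and "s = 2 ^ k" and "1 \<le> k" and "k \<le> v"
    and "n = (s - 1) * q + s"
    and "maximal_arc K n s"
    and "mu = ((s - 1) * n) div 2"
  shows "optimal_saturating_1_mu K mu n \<and>
    (\<forall>h::nat \<Rightarrow> 'a ^ 3. corresponds n h K \<longrightarrow>
       (let C = parity_code n h in
          code_dim C = n - 3 \<and> covering_radius n C = 2 \<and>
          (s = 2 \<longrightarrow> PMCF n C 2 mu) \<and> (s \<ge> 4 \<longrightarrow> APMCF n C 2 mu)))"
proof -
  have "(2::nat) ^ 1 \<le> 2 ^ k" by (rule power_increasing) (use assms(4) in simp_all)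
  moreover have "(2::nat) ^ k \<le> 2 ^ v" by (rule power_increasing) (use assms(5) in simp_all)
  ultimately have s: "2 \<le> s" "s \<le> CARD('a)" using assms(1-3) by simp_all
  have "1 * 2 \<le> (s - 1) * q" using s assms(1) by (intro mult_le_mono) simp_all
  then have "4 \<le> n" using assms(6) s by simp
  have "1 * 4 \<le> (s - 1) * n" using s \<open>4 \<le> n\<close> by (intro mult_le_mono) simp_all
  then have "0 < mu" using assms(8) by simp
  have opt: "optimal_saturating_1_mu K mu n"
    using maximal_arc_optimal_saturating[OF assms(7) s] \<open>4 \<le> n\<close> assms(8) by simp
  moreover have "code_dim C = n - 3 \<and> covering_radius n C = 2 \<and>
      (s = 2 \<longrightarrow> PMCF n C 2 mu) \<and> (s \<ge> 4 \<longrightarrow> APMCF n C 2 mu)"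
    if corr: "corresponds n h K" and C: "C = parity_code n h" for h C
  proof -
    interpret point_set_code n h K by (rule point_set_code.intro[OF corr])
    have dim: "code_dim C = n - 3"
      using code_dim_if_pg_spans opt C
      unfolding optimal_saturating_1_mu_def saturating_1_mu_def by simp
    have "APMCF n C 2 mu" using APMCF_if_optimal_saturating[OF opt \<open>0 < mu\<close>] C by simp
    moreover have "4 \<le> min_distance n C" if "s = 2"
    proof -
      have "\<forall>l\<in>pg_lines. card (l \<inter> K) \<le> 2" using assms(7) that unfolding maximal_arc_def by auto
      moreover have "\<exists>c\<in>C. c \<noteq> 0" using nonzero_codeword_exists[of n h] dim \<open>4 \<le> n\<close> C by simp
      ultimately show ?thesis
        unfolding C using parity_code_min_distance_ge min_weight_ge_4 by blast
    qed
    ultimately show ?thesis using dim unfolding PMCF_def APMCF_def by simp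
  qed
  ultimately show ?thesis by (simp add: Let_def)
qed

end
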